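(* Let $M$ be a metric space with $\#M\ge3$ and $s(M)>0$. For each pair $i,j\in M$ let a real number $a_{ij}=a_{ji}$ be given with $a_{ii}=0$ and $|a_{ij}|<s(M)$; define $\rho(i,j)=|ij|+a_{ij}$ and $a=\sup_{i,j}|a_{ij}|$. Assume $a\le t(M)/3$. Then: (1) $\rho$ is a metric on $M$; (2) the metric space $M_\rho=(M,\rho)$ satisfies $d_{GH}(M,M_\rho)\le a/2$; (3) if in addition $a/2<\min\{s(M)/4,e(M)/4\}$, then $d_{GH}(M,M_\rho)=a/2$; (4) under the assumptions of (3), if $a_{ij}\in\{a,-a\}$ for all $i\ne j$, then $M_\rho\in S_{a/2}(M)$; moreover, if $a'_{ij}=a'_{ji}\in\{a,-a\}$ ($i\ne j$), $a'_{ii}=0$, is another such family with $\rho'(i,j)=|ij|+a'_{ij}$, and $\rho_t=(1-t)\rho+t\rho'$ for $t\in[0,1]$, then each $(M,\rho_t)$ is a metric space, the map $t\mapsto M^t:=(M,\rho_t)$ is a continuous curve in $\mathcal{GH}$, and if $a_{ij}=a'_{ij}$ for at least one pair $i\ne j$, then $M^t\in S_{a/2}(M)$ for all $t\in[0,1]$.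
   Context: For a metric space $M$ with $\#M\ge3$: $s(M)=\inf\{|xx'|: x\ne x'\}$; $t(M)=\inf\{|xx'|+|x'x''|-|xx''|: x,x',x''\text{ pairwise distinct}\}$; $S(M)$ is the set of bijections $M\to M$ and $e(M)=\inf\{\operatorname{dis}f: f\in S(M), f\ne\mathrm{id}\}$, where $\operatorname{dis}f=\sup_{x,x'}||xx'|-|f(x)f(x')||$. $d_{GH}$ is the Gromov–Hausdorff distance: $d_{GH}(X,Y)=\frac12\inf\{\operatorname{dis}R\}$ over correspondences $R\subset X\times Y$ (relations with both projections surjective), $\operatorname{dis}R=\sup\{||xx'|-|yy'||:(x,y),(x',y')\in R\}$. $\mathcal{GH}$ is the class (NBG sense) of isometry classes of all metric spaces; for each cardinal $n$ the subclass $\mathcal{GH}_n$ of spaces of cardinality at most $n$ is a set with topology based on open $d_{GH}$-balls, and a map from a topological space into $\mathcal{GH}$ is continuous if it is continuous into some (equivalently, every) $\mathcal{GH}_n$ containing its image. $S_r(X)=\{Y\in\mathcal{GH}: d_{GH}(X,Y)=r\}$. *)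

theory Defs
  imports "HOL-Analysis.Analysis"
begin

definition metric_on :: "'a set \<Rightarrow> ('a \<Rightarrow> 'a \<Rightarrow> real) \<Rightarrow> bool" where
  "metric_on M d \<longleftrightarrow>
     (\<forall>x\<in>M. \<forall>y\<in>M. 0 \<le> d x y \<and> d x y = d y x \<and> (d x y = 0 \<longleftrightarrow> x = y)) \<and>
     (\<forall>x\<in>M. \<forall>y\<in>M. \<forall>z\<in>M. d x z \<le> d x y + d y z)"

definition s_inv :: "'a set \<Rightarrow> ('a \<Rightarrow> 'a \<Rightarrow> real) \<Rightarrow> real" where
  "s_inv M d = Inf {d x y | x y. x \<in> M \<and> y \<in> M \<and> x \<noteq> y}"

definition t_inv :: "'a set \<Rightarrow> ('a \<Rightarrow> 'a \<Rightarrow> real) \<Rightarrow> real" where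
  "t_inv M d = Inf {d x y + d y z - d x z | x y z.
      x \<in> M \<and> y \<in> M \<and> z \<in> M \<and> x \<noteq> y \<and> y \<noteq> z \<and> x \<noteq> z}"

text \<open>Distortion of a map (may be infinite, hence extended reals).\<close>
definition dis_map :: "'a set \<Rightarrow> ('a \<Rightarrow> 'a \<Rightarrow> real) \<Rightarrow> ('a \<Rightarrow> 'a) \<Rightarrow> ereal" where
  "dis_map M d f = (SUP x\<in>M. SUP y\<in>M. ereal \<bar>d x y - d (f x) (f y)\<bar>)"

definition e_inv :: "'a set \<Rightarrow> ('a \<Rightarrow> 'a \<Rightarrow> real) \<Rightarrow> ereal" where
  "e_inv M d = (INF f\<in>{f. bij_betw f M M \<and> (\<exists>x\<in>M. f x \<noteq> x)}. dis_map M d f)"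

definition correspondence :: "'a set \<Rightarrow> 'b set \<Rightarrow> ('a \<times> 'b) set \<Rightarrow> bool" where
  "correspondence X Y R \<longleftrightarrow> R \<subseteq> X \<times> Y \<and> fst ` R = X \<and> snd ` R = Y"

definition dis_rel :: "('a \<Rightarrow> 'a \<Rightarrow> real) \<Rightarrow> ('b \<Rightarrow> 'b \<Rightarrow> real) \<Rightarrow> ('a \<times> 'b) set \<Rightarrow> ereal" where
  "dis_rel dX dY R = (SUP p\<in>R. SUP q\<in>R. ereal \<bar>dX (fst p) (fst q) - dY (snd p) (snd q)\<bar>)"

definition GH_dist :: "'a set \<Rightarrow> ('a \<Rightarrow> 'a \<Rightarrow> real) \<Rightarrow> 'b set \<Rightarrow> ('b \<Rightarrow> 'b \<Rightarrow> real) \<Rightarrow> ereal" where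
  "GH_dist X dX Y dY = (INF R\<in>{R. correspondence X Y R}. dis_rel dX dY R) / 2"

text \<open>Continuity of a curve [0,1] -> GH of metric spaces on a common carrier, w.r.t. the
  topology generated by open GH-balls (equivalently, epsilon-delta in d_GH).\<close>
definition GH_continuous_curve :: "'a set \<Rightarrow> (real \<Rightarrow> 'a \<Rightarrow> 'a \<Rightarrow> real) \<Rightarrow> bool" where
  "GH_continuous_curve M r \<longleftrightarrow>
     (\<forall>t0\<in>{0..1}. \<forall>\<epsilon>>0. \<exists>\<delta>>0. \<forall>t\<in>{0..1}. \<bar>t - t0\<bar> < \<delta> \<longrightarrow>
        GH_dist M (r t) M (r t0) < ereal \<epsilon>)"

end

theory Submission
  imports Defs
begin

text \<open>
  A perturbation of size at most \<open>t(M)/3\<close> cannot break a triangle inequality between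
  distinct points, and a perturbation below \<open>s(M)\<close> keeps distinct points apart, so \<open>\<rho>\<close>
  is a metric; the identity correspondence has distortion \<open>a\<close>, giving \<open>d\<^sub>G\<^sub>H \<le> a/2\<close>.
  Conversely, a correspondence of distortion \<open>\<delta> < a\<close> with \<open>2a < s(M)\<close> is the graph of a
  bijection \<open>f\<close> of \<open>M\<close>: if \<open>f\<close> is the identity its distortion is \<open>sup |a\<^sub>i\<^sub>j| = a\<close>, otherwise
  \<open>dis f \<le> \<delta> + a < 2a < e(M)\<close>; either way a contradiction. Along the segment \<open>\<rho>\<^sub>t\<close> the
  perturbation stays bounded by \<open>a\<close> and keeps the common value \<open>\<plusminus>a\<close>, so the same
  argument applies to every \<open>\<rho>\<^sub>t\<close>, and \<open>d\<^sub>G\<^sub>H(\<rho>\<^sub>t, \<rho>\<^sub>t\<^sub>0) \<le> |t - t\<^sub>0| a\<close> gives continuity.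
\<close>

lemma s_inv_le_dist:
  assumes "metric_on M d" "x \<in> M" "y \<in> M" "x \<noteq> y"
  shows "s_inv M d \<le> d x y"
  unfolding s_inv_def
proof (rule cInf_lower)
  show "d x y \<in> {d x y |x y. x \<in> M \<and> y \<in> M \<and> x \<noteq> y}" using assms by blast
  show "bdd_below {d x y |x y. x \<in> M \<and> y \<in> M \<and> x \<noteq> y}"
    using assms(1) unfolding metric_on_def bdd_below_def by (intro exI[of _ 0]) auto
qed

lemma t_inv_le_defect:
  assumes "metric_on M d" "x \<in> M" "y \<in> M" "z \<in> M" "x \<noteq> y" "y \<noteq> z" "x \<noteq> z"
  shows "t_inv M d \<le> d x y + d y z - d x z"
  unfolding t_inv_def
proof (rule cInf_lower)
  show "d x y + d y z - d x z \<in> {d x y + d y z - d x z |x y z.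
      x \<in> M \<and> y \<in> M \<and> z \<in> M \<and> x \<noteq> y \<and> y \<noteq> z \<and> x \<noteq> z}" using assms by blast
  show "bdd_below {d x y + d y z - d x z |x y z.
      x \<in> M \<and> y \<in> M \<and> z \<in> M \<and> x \<noteq> y \<and> y \<noteq> z \<and> x \<noteq> z}"
    using assms(1) unfolding metric_on_def bdd_below_def
    by (intro exI[of _ 0]) (auto simp: diff_ge_0_iff_ge)
qed

lemma metric_on_perturbation:
  assumes metric: "metric_on M d"
    and sym: "\<forall>i\<in>M. \<forall>j\<in>M. B i j = B j i"
    and diag: "\<forall>i\<in>M. B i i = 0"
    and small: "\<forall>i\<in>M. \<forall>j\<in>M. i \<noteq> j \<longrightarrow> \<bar>B i j\<bar> < s_inv M d"
    and bound: "\<forall>i\<in>M. \<forall>j\<in>M. \<bar>B i j\<bar> \<le> b"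
    and defect: "3 * b \<le> t_inv M d"
  shows "metric_on M (\<lambda>i j. d i j + B i j)"
proof -
  have d: "\<forall>x\<in>M. \<forall>y\<in>M. 0 \<le> d x y \<and> d x y = d y x \<and> (d x y = 0 \<longleftrightarrow> x = y)"
    using metric unfolding metric_on_def by auto
  have pos: "0 < d x y + B x y" if "x \<in> M" "y \<in> M" "x \<noteq> y" for x y
    using s_inv_le_dist[OF metric that] small that by fastforce
  have zero: "d x x + B x x = 0" if "x \<in> M" for x
    using d diag that by simp
  have nonneg: "0 \<le> d x y + B x y" if "x \<in> M" "y \<in> M" for x y
    using pos[OF that] zero[OF that(1)] by (cases "x = y") auto
  have triangle: "d x z + B x z \<le> d x y + B x y + (d y z + B y z)"
    if xyz: "x \<in> M" "y \<in> M" "z \<in> M" for x y z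
  proof (cases "x = y \<or> y = z \<or> x = z")
    case True
    then show ?thesis using zero nonneg xyz by auto
  next
    case False
    then have "t_inv M d \<le> d x y + d y z - d x z" using t_inv_le_defect[OF metric xyz] by blast
    moreover have "\<bar>B x y\<bar> \<le> b" "\<bar>B y z\<bar> \<le> b" "\<bar>B x z\<bar> \<le> b" using bound xyz by auto
    ultimately show ?thesis using defect by linarith
  qed
  show ?thesis
    unfolding metric_on_def
  proof (intro conjI ballI)
    fix x y assume xy: "x \<in> M" "y \<in> M"
    show "0 \<le> d x y + B x y" by (rule nonneg[OF xy])
    show "d x y + B x y = d y x + B y x" using d sym xy by simp
    show "d x y + B x y = 0 \<longleftrightarrow> x = y" using pos[OF xy] zero[OF xy(1)] by fastforce
  qed (fact triangle)
qed

lemma dis_rel_le_iff: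
  "dis_rel dX dY R \<le> ereal c \<longleftrightarrow>
     (\<forall>p\<in>R. \<forall>q\<in>R. \<bar>dX (fst p) (fst q) - dY (snd p) (snd q)\<bar> \<le> c)"
  unfolding dis_rel_def by (simp add: SUP_le_iff)

lemma GH_dist_le_uniform_diff:
  assumes "\<forall>x\<in>M. \<forall>y\<in>M. \<bar>d1 x y - d2 x y\<bar> \<le> c"
  shows "GH_dist M d1 M d2 \<le> ereal (c / 2)"
proof -
  let ?R = "{(x, x) | x. x \<in> M}"
  have "correspondence M M ?R" unfolding correspondence_def by (auto simp: image_def)
  moreover have "dis_rel d1 d2 ?R \<le> ereal c" unfolding dis_rel_le_iff using assms by auto
  ultimately have "(INF R\<in>{R. correspondence M M R}. dis_rel d1 d2 R) \<le> ereal c"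
    by (meson INF_lower2 mem_Collect_eq)
  then show ?thesis unfolding GH_dist_def by (cases "INF R\<in>{R. correspondence M M R}. dis_rel d1 d2 R") auto
qed

lemma correspondence_graph_of_bij:
  assumes corr: "correspondence X Y R"
    and dis: "dis_rel dX dY R \<le> ereal \<delta>"
    and diagX: "\<forall>x\<in>X. dX x x = 0" and diagY: "\<forall>y\<in>Y. dY y y = 0"
    and sepX: "\<forall>x\<in>X. \<forall>x'\<in>X. x \<noteq> x' \<longrightarrow> \<delta> < dX x x'"
    and sepY: "\<forall>y\<in>Y. \<forall>y'\<in>Y. y \<noteq> y' \<longrightarrow> \<delta> < dY y y'"
  obtains f where "bij_betw f X Y" "\<forall>x\<in>X. (x, f x) \<in> R"
proof -
  have RXY: "R \<subseteq> X \<times> Y" and fstR: "fst ` R = X" and sndR: "snd ` R = Y"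
    using corr unfolding correspondence_def by auto
  have close: "\<bar>dX x x' - dY y y'\<bar> \<le> \<delta>" if "(x, y) \<in> R" "(x', y') \<in> R" for x y x' y'
    using dis that unfolding dis_rel_le_iff by force
  have functional: "y = y'" if "(x, y) \<in> R" "(x, y') \<in> R" for x y y'
    using close[OF that] sepY diagX RXY that by fastforce
  have injective: "x = x'" if "(x, y) \<in> R" "(x', y) \<in> R" for x x' y
    using close[OF that] sepX diagY RXY that by fastforce
  define f where "f x = (SOME y. (x, y) \<in> R)" for x
  have graph: "(x, f x) \<in> R" if x: "x \<in> X" for x
  proof -
    obtain y where "(x, y) \<in> R" using fstR x by force
    then show ?thesis unfolding f_def by (rule someI)
  qed
  have "inj_on f X" using graph injective by (metis inj_onI)
  moreover have "f ` X = Y"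
  proof
    show "f ` X \<subseteq> Y" using graph RXY by auto
    show "Y \<subseteq> f ` X"
    proof
      fix y assume "y \<in> Y"
      then obtain x where "(x, y) \<in> R" using sndR by force
      then show "y \<in> f ` X" using functional graph RXY by (metis SigmaD1 image_eqI subsetD)
    qed
  qed
  ultimately have "bij_betw f X Y" by (simp add: bij_betw_def)
  with graph show ?thesis using that by blast
qed

lemma e_inv_le:
  assumes "bij_betw f M M" and "\<exists>x\<in>M. f x \<noteq> x"
    and "\<forall>x\<in>M. \<forall>x'\<in>M. \<bar>d x x' - d (f x) (f x')\<bar> \<le> c"
  shows "e_inv M d \<le> ereal c"
proof -
  have "e_inv M d \<le> dis_map M d f"
    unfolding e_inv_def using assms(1,2) by (auto intro!: INF_lower)
  also have "dis_map M d f \<le> ereal c"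
    unfolding dis_map_def using assms(3) by (auto intro!: SUP_least)
  finally show ?thesis .
qed

lemma dis_rel_perturbation_ge:
  assumes metric: "metric_on M d"
    and diag: "\<forall>i\<in>M. B i i = 0"
    and bound: "\<forall>i\<in>M. \<forall>j\<in>M. \<bar>B i j\<bar> \<le> b"
    and least: "\<forall>c. (\<forall>i\<in>M. \<forall>j\<in>M. \<bar>B i j\<bar> \<le> c) \<longrightarrow> b \<le> c"
    and below_s: "2 * b < s_inv M d"
    and below_e: "ereal (2 * b) < e_inv M d"
    and corr: "correspondence M M R"
  shows "ereal b \<le> dis_rel d (\<lambda>i j. d i j + B i j) R"
proof (rule ccontr)
  let ?\<rho> = "\<lambda>i j. d i j + B i j"
  have sep_d: "b < d x y" and sep_\<rho>: "b < ?\<rho> x y" if "x \<in> M" "y \<in> M" "x \<noteq> y" for x y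
  proof -
    have "2 * b < d x y" using s_inv_le_dist[OF metric that] below_s by linarith
    moreover have "0 \<le> b" "\<bar>B x y\<bar> \<le> b" using bound diag that by force+
    ultimately show "b < d x y" "b < ?\<rho> x y" by linarith+
  qed
  assume "\<not> ereal b \<le> dis_rel d ?\<rho> R"
  then have "dis_rel d ?\<rho> R < ereal b" by simp
  then obtain \<delta> where "dis_rel d ?\<rho> R < ereal \<delta>" and "ereal \<delta> < ereal b"
    using ereal_dense2 by blast
  then have dis: "dis_rel d ?\<rho> R \<le> ereal \<delta>" and "\<delta> < b" by simp_all
  obtain f where f: "bij_betw f M M" and graph: "\<forall>x\<in>M. (x, f x) \<in> R"
  proof (rule correspondence_graph_of_bij[OF corr dis])
    show "\<forall>x\<in>M. d x x = 0" "\<forall>y\<in>M. ?\<rho> y y = 0"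
      using metric diag unfolding metric_on_def by auto
    show "\<forall>x\<in>M. \<forall>x'\<in>M. x \<noteq> x' \<longrightarrow> \<delta> < d x x'"
      using sep_d by (auto intro: less_trans[OF \<open>\<delta> < b\<close>])
    show "\<forall>y\<in>M. \<forall>y'\<in>M. y \<noteq> y' \<longrightarrow> \<delta> < ?\<rho> y y'"
      using sep_\<rho> by (auto intro: less_trans[OF \<open>\<delta> < b\<close>])
  qed
  have f_close: "\<bar>d x x' - ?\<rho> (f x) (f x')\<bar> \<le> \<delta>" if "x \<in> M" "x' \<in> M" for x x'
  proof -
    have "(x, f x) \<in> R" "(x', f x') \<in> R" using graph that by auto
    with dis[unfolded dis_rel_le_iff] show ?thesis by fastforce
  qed
  show False
  proof (cases "\<forall>x\<in>M. f x = x")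
    case True
    have "\<forall>i\<in>M. \<forall>j\<in>M. \<bar>B i j\<bar> \<le> \<delta>"
    proof (intro ballI)
      fix i j assume "i \<in> M" "j \<in> M"
      with f_close[of i j] True show "\<bar>B i j\<bar> \<le> \<delta>" by simp
    qed
    with least have "b \<le> \<delta>" by blast
    with \<open>\<delta> < b\<close> show False by simp
  next
    case False
    have "\<forall>x\<in>M. \<forall>x'\<in>M. \<bar>d x x' - d (f x) (f x')\<bar> \<le> \<delta> + b"
    proof (intro ballI)
      fix x x' assume xx': "x \<in> M" "x' \<in> M"
      then have "f x \<in> M" "f x' \<in> M" using f bij_betwE by blast+
      with bound have "\<bar>B (f x) (f x')\<bar> \<le> b" by blast
      with f_close[OF xx'] show "\<bar>d x x' - d (f x) (f x')\<bar> \<le> \<delta> + b" by linarith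
    qed
    with f False have "e_inv M d \<le> ereal (\<delta> + b)" by (intro e_inv_le) auto
    with below_e have "ereal (2 * b) < ereal (\<delta> + b)" by (rule order.strict_trans2)
    with \<open>\<delta> < b\<close> show False by simp
  qed
qed

lemma GH_dist_perturbation_eq:
  assumes metric: "metric_on M d"
    and diag: "\<forall>i\<in>M. B i i = 0"
    and bound: "\<forall>i\<in>M. \<forall>j\<in>M. \<bar>B i j\<bar> \<le> b"
    and least: "\<forall>c. (\<forall>i\<in>M. \<forall>j\<in>M. \<bar>B i j\<bar> \<le> c) \<longrightarrow> b \<le> c"
    and below_s: "2 * b < s_inv M d"
    and below_e: "ereal (2 * b) < e_inv M d"
  shows "GH_dist M d M (\<lambda>i j. d i j + B i j) = ereal (b / 2)"
proof -
  let ?\<rho> = "\<lambda>i j. d i j + B i j"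
  have "ereal b \<le> (INF R\<in>{R. correspondence M M R}. dis_rel d ?\<rho> R)"
    using dis_rel_perturbation_ge[OF assms] by (auto intro!: INF_greatest)
  then have "ereal (b / 2) \<le> GH_dist M d M ?\<rho>"
    unfolding GH_dist_def by (cases "INF R\<in>{R. correspondence M M R}. dis_rel d ?\<rho> R") auto
  moreover have "GH_dist M d M ?\<rho> \<le> ereal (b / 2)"
    using bound by (intro GH_dist_le_uniform_diff) auto
  ultimately show ?thesis by (rule antisym[rotated])
qed

lemma GH_continuous_curve_interpolation:
  assumes "\<forall>x\<in>M. \<forall>y\<in>M. \<bar>\<rho>\<^sub>1 x y - \<rho>\<^sub>0 x y\<bar> \<le> c"
  shows "GH_continuous_curve M (\<lambda>t x y. (1 - t) * \<rho>\<^sub>0 x y + t * \<rho>\<^sub>1 x y)"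
proof -
  let ?r = "\<lambda>t x y. (1 - t) * \<rho>\<^sub>0 x y + t * \<rho>\<^sub>1 x y"
  have GH_le: "GH_dist M (?r t) M (?r t\<^sub>0) \<le> ereal (\<bar>t - t\<^sub>0\<bar> * \<bar>c\<bar> / 2)" for t t\<^sub>0
  proof (rule GH_dist_le_uniform_diff, intro ballI)
    fix x y assume "x \<in> M" "y \<in> M"
    then have "\<bar>\<rho>\<^sub>1 x y - \<rho>\<^sub>0 x y\<bar> \<le> \<bar>c\<bar>" using assms by force
    moreover have "?r t x y - ?r t\<^sub>0 x y = (t - t\<^sub>0) * (\<rho>\<^sub>1 x y - \<rho>\<^sub>0 x y)"
      by (simp add: algebra_simps)
    ultimately show "\<bar>?r t x y - ?r t\<^sub>0 x y\<bar> \<le> \<bar>t - t\<^sub>0\<bar> * \<bar>c\<bar>"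
      by (simp add: abs_mult mult_left_mono)
  qed
  show ?thesis
    unfolding GH_continuous_curve_def
  proof (intro ballI allI impI)
    fix t\<^sub>0 \<epsilon> :: real assume "\<epsilon> > 0"
    show "\<exists>\<delta>>0. \<forall>t\<in>{0..1}. \<bar>t - t\<^sub>0\<bar> < \<delta> \<longrightarrow> GH_dist M (?r t) M (?r t\<^sub>0) < ereal \<epsilon>"
    proof (intro exI[of _ "\<epsilon> / (\<bar>c\<bar> + 1)"] conjI ballI impI)
      show "0 < \<epsilon> / (\<bar>c\<bar> + 1)" using \<open>\<epsilon> > 0\<close> by simp
      fix t assume "\<bar>t - t\<^sub>0\<bar> < \<epsilon> / (\<bar>c\<bar> + 1)"
      then have "\<bar>t - t\<^sub>0\<bar> * (\<bar>c\<bar> + 1) < \<epsilon>"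
        by (simp add: pos_less_divide_eq)
      moreover have "\<bar>t - t\<^sub>0\<bar> * \<bar>c\<bar> \<le> \<bar>t - t\<^sub>0\<bar> * (\<bar>c\<bar> + 1)"
        by (simp add: mult_left_mono)
      moreover have "0 \<le> \<bar>t - t\<^sub>0\<bar> * \<bar>c\<bar>" by simp
      ultimately have "\<bar>t - t\<^sub>0\<bar> * \<bar>c\<bar> / 2 < \<epsilon>" by linarith
      then have "ereal (\<bar>t - t\<^sub>0\<bar> * \<bar>c\<bar> / 2) < ereal \<epsilon>" by simp
      with GH_le show "GH_dist M (?r t) M (?r t\<^sub>0) < ereal \<epsilon>" by (rule order.strict_trans1)
    qed
  qed
qed

lemma abs_convex_combination_le:
  fixes x y a t :: real
  assumes "\<bar>x\<bar> \<le> a" "\<bar>y\<bar> \<le> a" "0 \<le> t" "t \<le> 1"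
  shows "\<bar>(1 - t) * x + t * y\<bar> \<le> a"
proof -
  have "(1 - t) * x + t * y \<le> a" "(1 - t) * - x + t * - y \<le> a"
    using assms by (intro convex_bound_le; simp add: abs_le_iff)+
  then show ?thesis by (simp add: abs_le_iff)
qed

lemma Sup_abs_bounds:
  fixes A :: "'a \<Rightarrow> 'a \<Rightarrow> real"
  assumes "M \<noteq> {}" and "\<forall>i\<in>M. \<forall>j\<in>M. \<bar>A i j\<bar> \<le> C"
  defines "a \<equiv> Sup {\<bar>A i j\<bar> | i j. i \<in> M \<and> j \<in> M}"
  shows "\<forall>i\<in>M. \<forall>j\<in>M. \<bar>A i j\<bar> \<le> a"
    and "\<forall>c. (\<forall>i\<in>M. \<forall>j\<in>M. \<bar>A i j\<bar> \<le> c) \<longrightarrow> a \<le> c"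
proof -
  have "bdd_above {\<bar>A i j\<bar> | i j. i \<in> M \<and> j \<in> M}"
    using assms(2) by (intro bdd_aboveI[of _ C]) auto
  then show "\<forall>i\<in>M. \<forall>j\<in>M. \<bar>A i j\<bar> \<le> a"
    unfolding a_def by (auto intro!: cSup_upper)
  show "\<forall>c. (\<forall>i\<in>M. \<forall>j\<in>M. \<bar>A i j\<bar> \<le> c) \<longrightarrow> a \<le> c"
    unfolding a_def
  proof (intro allI impI cSup_least)
    show "{\<bar>A i j\<bar> | i j. i \<in> M \<and> j \<in> M} \<noteq> {}" using \<open>M \<noteq> {}\<close> by blast
  qed auto
qed

lemma perturbation_segment:
  fixes A A' :: "'a \<Rightarrow> 'a \<Rightarrow> real"
  assumes metric: "metric_on M d"
    and A_sym: "\<forall>i\<in>M. \<forall>j\<in>M. A i j = A j i" and A_diag: "\<forall>i\<in>M. A i i = 0"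
    and A_bound: "\<forall>i\<in>M. \<forall>j\<in>M. \<bar>A i j\<bar> \<le> a"
    and A'_sym: "\<forall>i\<in>M. \<forall>j\<in>M. A' i j = A' j i" and A'_diag: "\<forall>i\<in>M. A' i i = 0"
    and A'_pm: "\<forall>i\<in>M. \<forall>j\<in>M. i \<noteq> j \<longrightarrow> A' i j = a \<or> A' i j = - a"
    and defect: "3 * a \<le> t_inv M d" and below_s: "2 * a < s_inv M d"
  defines "\<rho>\<^sub>t \<equiv> \<lambda>t i j. (1 - t) * (d i j + A i j) + t * (d i j + A' i j)"
  shows "\<forall>t\<in>{0..1}. metric_on M (\<rho>\<^sub>t t)"
    and "GH_continuous_curve M \<rho>\<^sub>t"
    and "\<lbrakk>ereal (2 * a) < e_inv M d; \<forall>i\<in>M. \<forall>j\<in>M. i \<noteq> j \<longrightarrow> A i j = a \<or> A i j = - a;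
          \<exists>i\<in>M. \<exists>j\<in>M. i \<noteq> j \<and> A i j = A' i j\<rbrakk>
         \<Longrightarrow> \<forall>t\<in>{0..1}. GH_dist M d M (\<rho>\<^sub>t t) = ereal (a / 2)"
proof -
  define B where "B t i j = (1 - t) * A i j + t * A' i j" for t i j
  have \<rho>\<^sub>t_eq: "\<rho>\<^sub>t t = (\<lambda>i j. d i j + B t i j)" for t
    unfolding \<rho>\<^sub>t_def B_def by (simp add: fun_eq_iff algebra_simps)
  have a_nonneg: "0 \<le> a" if "i \<in> M" for i
    using A_bound A_diag that by force
  have A'_bound: "\<forall>i\<in>M. \<forall>j\<in>M. \<bar>A' i j\<bar> \<le> a"
    using A'_pm A'_diag a_nonneg by fastforce
  have B_bound: "\<forall>i\<in>M. \<forall>j\<in>M. \<bar>B t i j\<bar> \<le> a" if "t \<in> {0..1}" for t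
    unfolding B_def using A_bound A'_bound that by (auto intro!: abs_convex_combination_le)
  have B_diag: "\<forall>i\<in>M. B t i i = 0" for t unfolding B_def using A_diag A'_diag by simp
  show "\<forall>t\<in>{0..1}. metric_on M (\<rho>\<^sub>t t)"
  proof
    fix t :: real assume t: "t \<in> {0..1}"
    show "metric_on M (\<rho>\<^sub>t t)" unfolding \<rho>\<^sub>t_eq
    proof (rule metric_on_perturbation[OF metric _ B_diag _ B_bound[OF t] defect])
      show "\<forall>i\<in>M. \<forall>j\<in>M. B t i j = B t j i" unfolding B_def using A_sym A'_sym by simp
      show "\<forall>i\<in>M. \<forall>j\<in>M. i \<noteq> j \<longrightarrow> \<bar>B t i j\<bar> < s_inv M d"
        using B_bound[OF t] a_nonneg below_s by fastforce
    qed
  qed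
  have "\<forall>i\<in>M. \<forall>j\<in>M. \<bar>(d i j + A' i j) - (d i j + A i j)\<bar> \<le> 2 * a"
    using A_bound A'_bound by (fastforce simp: abs_le_iff)
  then show "GH_continuous_curve M \<rho>\<^sub>t"
    unfolding \<rho>\<^sub>t_def by (rule GH_continuous_curve_interpolation)
  assume below_e: "ereal (2 * a) < e_inv M d"
    and A_pm: "\<forall>i\<in>M. \<forall>j\<in>M. i \<noteq> j \<longrightarrow> A i j = a \<or> A i j = - a"
    and agree: "\<exists>i\<in>M. \<exists>j\<in>M. i \<noteq> j \<and> A i j = A' i j"
  from agree obtain i\<^sub>0 j\<^sub>0 where ij: "i\<^sub>0 \<in> M" "j\<^sub>0 \<in> M" "i\<^sub>0 \<noteq> j\<^sub>0" "A' i\<^sub>0 j\<^sub>0 = A i\<^sub>0 j\<^sub>0"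
    by auto
  show "\<forall>t\<in>{0..1}. GH_dist M d M (\<rho>\<^sub>t t) = ereal (a / 2)"
  proof
    fix t :: real assume t: "t \<in> {0..1}"
    have "B t i\<^sub>0 j\<^sub>0 = A i\<^sub>0 j\<^sub>0" unfolding B_def using ij by (simp add: algebra_simps)
    moreover have "\<bar>A i\<^sub>0 j\<^sub>0\<bar> = a"
      using A_pm ij a_nonneg[OF ij(1)] by (metis abs_minus_cancel abs_of_nonneg)
    ultimately have "\<forall>c. (\<forall>i\<in>M. \<forall>j\<in>M. \<bar>B t i j\<bar> \<le> c) \<longrightarrow> a \<le> c" using ij by fastforce
    then show "GH_dist M d M (\<rho>\<^sub>t t) = ereal (a / 2)"
      unfolding \<rho>\<^sub>t_eq by (rule GH_dist_perturbation_eq[OF metric B_diag B_bound[OF t] _ below_s below_e])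
  qed
qed

theorem lemma10:
  fixes M :: "'a set" and d :: "'a \<Rightarrow> 'a \<Rightarrow> real" and A :: "'a \<Rightarrow> 'a \<Rightarrow> real"
  assumes metric: "metric_on M d"
    and three: "\<exists>x y z. x \<in> M \<and> y \<in> M \<and> z \<in> M \<and> x \<noteq> y \<and> y \<noteq> z \<and> x \<noteq> z"
    and s_pos: "s_inv M d > 0"
    and A_sym: "\<forall>i\<in>M. \<forall>j\<in>M. A i j = A j i"
    and A_diag: "\<forall>i\<in>M. A i i = 0"
    and A_small: "\<forall>i\<in>M. \<forall>j\<in>M. \<bar>A i j\<bar> < s_inv M d"
    and a_le: "Sup {\<bar>A i j\<bar> | i j. i \<in> M \<and> j \<in> M} \<le> t_inv M d / 3"
  defines "a \<equiv> Sup {\<bar>A i j\<bar> | i j. i \<in> M \<and> j \<in> M}"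
    and "\<rho> \<equiv> (\<lambda>i j. d i j + A i j)"
  shows
    "metric_on M \<rho>
     \<and> GH_dist M d M \<rho> \<le> ereal (a / 2)
     \<and> (a / 2 < s_inv M d / 4 \<and> ereal (a / 2) < e_inv M d / 4 \<longrightarrow>
          GH_dist M d M \<rho> = ereal (a / 2))
     \<and> (a / 2 < s_inv M d / 4 \<and> ereal (a / 2) < e_inv M d / 4 \<and>
        (\<forall>i\<in>M. \<forall>j\<in>M. i \<noteq> j \<longrightarrow> A i j = a \<or> A i j = - a) \<longrightarrow>
          GH_dist M d M \<rho> = ereal (a / 2)
          \<and> (\<forall>A' :: 'a \<Rightarrow> 'a \<Rightarrow> real.
               (\<forall>i\<in>M. \<forall>j\<in>M. A' i j = A' j i) \<and> (\<forall>i\<in>M. A' i i = 0) \<and>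
               (\<forall>i\<in>M. \<forall>j\<in>M. i \<noteq> j \<longrightarrow> A' i j = a \<or> A' i j = - a) \<longrightarrow>
               (let \<rho>' = (\<lambda>i j. d i j + A' i j);
                    \<rho>t = (\<lambda>t i j. (1 - t) * \<rho> i j + t * \<rho>' i j)
                in (\<forall>t\<in>{0..1}. metric_on M (\<rho>t t))
                   \<and> GH_continuous_curve M \<rho>t
                   \<and> ((\<exists>i\<in>M. \<exists>j\<in>M. i \<noteq> j \<and> A i j = A' i j) \<longrightarrow>
                        (\<forall>t\<in>{0..1}. GH_dist M d M (\<rho>t t) = ereal (a / 2))))))"
proof -
  have M_nonempty: "M \<noteq> {}" using three by blast
  have A_bounded: "\<forall>i\<in>M. \<forall>j\<in>M. \<bar>A i j\<bar> \<le> s_inv M d" using A_small by (simp add: less_imp_le)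
  note a_upper = Sup_abs_bounds(1)[OF M_nonempty A_bounded, folded a_def]
    and a_least = Sup_abs_bounds(2)[OF M_nonempty A_bounded, folded a_def]
  have defect: "3 * a \<le> t_inv M d" using a_le unfolding a_def by simp
  have below: "2 * a < s_inv M d \<and> ereal (2 * a) < e_inv M d"
    if "a / 2 < s_inv M d / 4 \<and> ereal (a / 2) < e_inv M d / 4"
    using that by (cases "e_inv M d") auto
  have "metric_on M \<rho>"
    unfolding \<rho>_def using metric_on_perturbation[OF metric A_sym A_diag _ a_upper defect] A_small by blast
  moreover have "GH_dist M d M \<rho> \<le> ereal (a / 2)"
    unfolding \<rho>_def using a_upper by (intro GH_dist_le_uniform_diff) auto
  moreover have "GH_dist M d M \<rho> = ereal (a / 2)"
    if "a / 2 < s_inv M d / 4 \<and> ereal (a / 2) < e_inv M d / 4"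
    using below[OF that] unfolding \<rho>_def by (intro GH_dist_perturbation_eq[OF metric A_diag a_upper a_least]) auto
  moreover note perturbation_segment[OF metric A_sym A_diag a_upper _ _ _ defect]
  ultimately show ?thesis
    unfolding Let_def \<rho>_def using below by (intro conjI impI allI; (elim conjE)?; blast)
qed

end
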